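(* Let $q=2^h$ with $h\not\equiv 2\pmod 4$, let $A,B,C,D\in\mathbb F_{q^4}$ with $B^{q^2+1}\neq 1$, and let $$\Lambda=\{(u,v)\in\mathbb F_{q^4}^2 : v^{q^2}+Au+Bv+u^q=0,\ v^{q^2}+u^{q^2}+v^q+Cu+Dv=0\}.$$ Then $\#\Lambda\le q^3$. *)

theory Defs
  imports Main
begin

end

theory Submission
  imports Defs "HOL-Number_Theory.Residues" "HOL-Computational_Algebra.Polynomial"
begin

(* Let sigma be the Frobenius x |-> x^q, an automorphism of order 4 of the field with q^4
   elements, which has characteristic 2.  The first equation and its sigma^2-conjugate form a
   linear system in v and sigma^2 v with determinant beta = 1 + B^(q^2+1) <> 0, so v is an
   additive function of u.  Substituting v and its conjugates into the second equation leaves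
   c0 u + c1 u^q + c2 u^(q^2) + c3 u^(q^3) = 0, which has at most q^3 roots unless
   c1 = c2 = c3 = 0.  In that case the vanishing conditions and their conjugates force
   sigma^2 B = B, B^q = B + 1 and B^4 = B + 1; then B lies in the field with 16 elements and
   B^(2^h) = B^4, i.e. h = 2 (mod 4). *)

lemma (in semiring_1) two_eq_0_CHAR_2: "CHAR('a) = 2 \<Longrightarrow> 2 = 0"
  by (metis of_nat_CHAR of_nat_numeral)

lemma (in ring_1) add_self_CHAR_2: "CHAR('a) = 2 \<Longrightarrow> x + x = 0"
  by (metis uminus_CHAR_2 add.right_inverse)

lemma (in ring_1) add_self_left_CHAR_2: "CHAR('a) = 2 \<Longrightarrow> x + (x + y) = y"
  by (simp add: add_self_CHAR_2 flip: add.assoc)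

lemma (in ring_1) eq_iff_add_eq_0_CHAR_2: "CHAR('a) = 2 \<Longrightarrow> x = y \<longleftrightarrow> x + y = 0"
  by (metis minus_CHAR_2 right_minus_eq)

lemma (in idom) square_eq_iff_CHAR_2:
  assumes "CHAR('a) = 2"
  shows "x * x = y * y \<longleftrightarrow> x = y"
proof
  assume "x * x = y * y"
  hence "(x + y) * (x + y) = 0"
    using assms by (simp add: algebra_simps add_self_CHAR_2 add_self_left_CHAR_2)
  hence "x + y = 0"
    by simp
  thus "x = y"
    using eq_iff_add_eq_0_CHAR_2[OF assms] by blast
qed simp

lemma CHAR_eq_2_if_card_UNIV_eq_power_2:
  assumes "card (UNIV :: 'a::idom set) = 2 ^ n"
  shows "CHAR('a) = 2"
proof -
  have "finite (UNIV :: 'a set)"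
    by (rule card_ge_0_finite) (simp add: assms)
  hence "prime CHAR('a)"
    by (intro prime_CHAR_semidom finite_imp_CHAR_pos)
  moreover have "CHAR('a) dvd 2 ^ n"
    using CHAR_dvd_CARD[where ?'a = 'a] by (simp only: assms)
  ultimately have "CHAR('a) dvd 2"
    by (rule prime_dvd_power)
  with \<open>prime CHAR('a)\<close> show ?thesis
    by (intro primes_dvd_imp_eq two_is_prime_nat)
qed

lemma power_card_UNIV_eq_same:
  fixes x :: "'a::{finite,field}"
  shows "x ^ card (UNIV :: 'a set) = x"
proof (cases "x = 0")
  case False
  define S where "S = UNIV - {0 :: 'a}"
  have "\<Prod>S = (\<Prod>y\<in>S. x * y)"
    unfolding S_def by (rule prod.reindex_bij_witness[of _ "\<lambda>y. x * y" "\<lambda>y. y / x"]) (use False in auto)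
  also have "\<dots> = x ^ card S * \<Prod>S"
    by (simp add: prod.distrib)
  finally have "\<Prod>S = x ^ card S * \<Prod>S" .
  moreover have "\<Prod>S \<noteq> 0"
    by (simp add: S_def)
  ultimately have "x ^ card S = 1"
    by (metis mult_cancel_right1)
  moreover have "card (UNIV :: 'a set) = Suc (card S)"
    unfolding S_def by (rule card.remove) simp_all
  ultimately show ?thesis
    by simp
qed (simp add: finite_UNIV_card_ge_0)

lemma two_power_mod_4_eq_2_if_root_of_x4_x_1:
  fixes b :: "'a::field"
  assumes char: "CHAR('a) = 2" and b4: "b ^ 4 = b + 1" and "b ^ 2 ^ h = b + 1"
  shows "h mod 4 = 2"
proof -
  have dream: "(x + 1) ^ 2 ^ k = x ^ 2 ^ k + 1" for x :: 'a and k
    using char by (subst freshmans_dream') simp_all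
  have "b ^ 16 = (b ^ 4) ^ 2 ^ 2"
    by (simp flip: power_mult)
  also have "\<dots> = b"
    using dream[of b 2] b4 char by (simp add: add.assoc two_eq_0_CHAR_2)
  finally have "b ^ 16 ^ k = b" for k
    by (induction k) (simp_all add: power_mult)
  moreover have "(2::nat) ^ h = 16 ^ (h div 4) * 2 ^ (h mod 4)"
  proof -
    have "(2::nat) ^ h = 2 ^ (4 * (h div 4) + h mod 4)"
      by simp
    thus ?thesis
      by (simp only: power_add power_mult) simp
  qed
  ultimately have "b ^ 2 ^ (h mod 4) = b + 1"
    using assms(3) by (metis power_mult)
  moreover have "b ^ 2 \<noteq> b + 1" "b ^ 8 \<noteq> b + 1"
  proof -
    have "b ^ 4 = (b ^ 2) ^ 2 ^ 1" "b ^ 8 = (b ^ 4) ^ 2 ^ 1"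
      by (simp_all flip: power_mult)
    thus "b ^ 2 \<noteq> b + 1" "b ^ 8 \<noteq> b + 1"
      using b4 dream[of b 1] dream[of "b ^ 2" 1] char by (auto simp: add.assoc two_eq_0_CHAR_2)
  qed
  moreover have "h mod 4 \<in> {0, 1, 2, 3}"
    by auto
  ultimately show ?thesis
    by auto
qed

lemma linearized_poly_roots_bound:
  fixes c :: "nat \<Rightarrow> 'a::idom"
  assumes "1 < q" "j < n" "c j \<noteq> 0"
  shows "finite {x. (\<Sum>i<n. c i * x ^ q ^ i) = 0}"
    and "card {x. (\<Sum>i<n. c i * x ^ q ^ i) = 0} \<le> q ^ (n - 1)"
proof -
  define p where "p = (\<Sum>i<n. monom (c i) (q ^ i))"
  have "coeff p (q ^ j) = (\<Sum>i<n. if i = j then c i else 0)"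
    unfolding p_def coeff_sum coeff_monom using power_inject_exp[OF \<open>1 < q\<close>]
    by (intro sum.cong) auto
  hence "p \<noteq> 0"
    using assms by auto
  moreover have "degree p \<le> q ^ (n - 1)"
    unfolding p_def using \<open>1 < q\<close>
    by (intro degree_sum_le) (auto intro!: order.trans[OF degree_monom_le] power_increasing)
  moreover have "{x. (\<Sum>i<n. c i * x ^ q ^ i) = 0} = {x. poly p x = 0}"
    by (simp add: p_def poly_sum poly_monom)
  ultimately show "finite {x. (\<Sum>i<n. c i * x ^ q ^ i) = 0}"
    and "card {x. (\<Sum>i<n. c i * x ^ q ^ i) = 0} \<le> q ^ (n - 1)"
    using poly_roots_finite card_poly_roots_bound[of p] by auto
qed

locale char2_order4_automorphism =
  fixes \<sigma> :: "'a::field \<Rightarrow> 'a"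
  assumes CHAR_2: "CHAR('a) = 2"
    and \<sigma>_add: "\<sigma> (x + y) = \<sigma> x + \<sigma> y"
    and \<sigma>_mult: "\<sigma> (x * y) = \<sigma> x * \<sigma> y"
    and \<sigma>_one: "\<sigma> 1 = 1"
    and \<sigma>_period: "\<sigma> (\<sigma> (\<sigma> (\<sigma> x))) = x"
begin

lemmas add_self = add_self_CHAR_2[OF CHAR_2]
  and add_self_left = add_self_left_CHAR_2[OF CHAR_2]
  and eq_iff_add_eq_0 = eq_iff_add_eq_0_CHAR_2[OF CHAR_2]
  and square_eq_iff = square_eq_iff_CHAR_2[OF CHAR_2]

lemma two_eq_0: "(2::'a) = 0"
  using two_eq_0_CHAR_2[OF CHAR_2] .

lemma \<sigma>_zero: "\<sigma> 0 = 0"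
proof -
  have "\<sigma> 0 + \<sigma> 0 = \<sigma> (0 + 0)"
    by (rule \<sigma>_add[symmetric])
  thus ?thesis
    by (simp add: add_self)
qed

lemmas \<sigma>_simps = \<sigma>_add \<sigma>_mult \<sigma>_one \<sigma>_zero \<sigma>_period

lemma \<sigma>_inject: "\<sigma> x = \<sigma> y \<longleftrightarrow> x = y"
  by (metis \<sigma>_period)

lemma \<sigma>_eq_1_iff: "\<sigma> x = 1 \<longleftrightarrow> x = 1"
  using \<sigma>_inject[of x 1] by (simp only: \<sigma>_one)

(* Up to conjugation by sigma^2, the conditions c1 = c2 = 0 on the reduced equation of
   linearized_system below, for the value of D that makes c3 = 0. *)
definition degenerate_pair :: "'a \<Rightarrow> 'a \<Rightarrow> bool" where
  "degenerate_pair a b \<longleftrightarrow>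
     a * \<sigma> a = 1 + \<sigma> b * (1 + \<sigma> (\<sigma> (\<sigma> b))) \<and>
     \<sigma> b * \<sigma> (\<sigma> (\<sigma> a)) + b * \<sigma> a = 1 + \<sigma> b * \<sigma> (\<sigma> (\<sigma> b))"

lemma degenerate_pair_\<sigma>:
  assumes "degenerate_pair a b"
  shows "degenerate_pair (\<sigma> a) (\<sigma> b)"
proof -
  have "\<sigma> (a * \<sigma> a) = \<sigma> (1 + \<sigma> b * (1 + \<sigma> (\<sigma> (\<sigma> b))))"
    and "\<sigma> (\<sigma> b * \<sigma> (\<sigma> (\<sigma> a)) + b * \<sigma> a) = \<sigma> (1 + \<sigma> b * \<sigma> (\<sigma> (\<sigma> b)))"
    using assms unfolding degenerate_pair_def by simp_all
  thus ?thesis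
    unfolding degenerate_pair_def by (simp only: \<sigma>_simps)
qed

lemma degenerate_pair_mult_eq:
  assumes "degenerate_pair a b"
  shows "(1 + \<sigma> b * \<sigma> (\<sigma> (\<sigma> b))) * a =
    \<sigma> b * (1 + b * (1 + \<sigma> (\<sigma> b))) + b * (1 + \<sigma> b * (1 + \<sigma> (\<sigma> (\<sigma> b))))"
proof -
  have E0: "a * \<sigma> a = 1 + \<sigma> b * (1 + \<sigma> (\<sigma> (\<sigma> b)))"
    and F0: "\<sigma> b * \<sigma> (\<sigma> (\<sigma> a)) + b * \<sigma> a = 1 + \<sigma> b * \<sigma> (\<sigma> (\<sigma> b))"
    using assms unfolding degenerate_pair_def by blast+
  have "degenerate_pair (\<sigma> (\<sigma> (\<sigma> a))) (\<sigma> (\<sigma> (\<sigma> b)))"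
    using assms by (intro degenerate_pair_\<sigma>)
  hence E3: "\<sigma> (\<sigma> (\<sigma> a)) * a = 1 + b * (1 + \<sigma> (\<sigma> b))"
    unfolding degenerate_pair_def by (simp only: \<sigma>_period)
  have "(1 + \<sigma> b * \<sigma> (\<sigma> (\<sigma> b))) * a = (\<sigma> b * \<sigma> (\<sigma> (\<sigma> a)) + b * \<sigma> a) * a"
    by (simp only: F0)
  also have "\<dots> = \<sigma> b * (\<sigma> (\<sigma> (\<sigma> a)) * a) + b * (a * \<sigma> a)"
    by (simp add: algebra_simps)
  finally show ?thesis
    by (simp only: E0 E3)
qed

lemma degenerate_pair_norm_identity:
  assumes "degenerate_pair a b"
  shows "\<sigma> b * \<sigma> (\<sigma> b) * (b * \<sigma> (\<sigma> b) + \<sigma> b * \<sigma> (\<sigma> (\<sigma> b)) + b * \<sigma> (\<sigma> (\<sigma> b))) = 1"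
proof -
  let ?b1 = "\<sigma> b" and ?b2 = "\<sigma> (\<sigma> b)" and ?b3 = "\<sigma> (\<sigma> (\<sigma> b))" and ?a2 = "\<sigma> (\<sigma> a)"
  have pair2: "degenerate_pair ?a2 ?b2"
    using assms by (intro degenerate_pair_\<sigma>)
  have "degenerate_pair (\<sigma> a) ?b1"
    using assms by (intro degenerate_pair_\<sigma>)
  hence F1: "?b2 * a + ?b1 * ?a2 = 1 + ?b2 * b"
    unfolding degenerate_pair_def by (simp only: \<sigma>_period)
  have Da0: "(1 + ?b1 * ?b3) * a = ?b1 * (1 + b * (1 + ?b2)) + b * (1 + ?b1 * (1 + ?b3))"
    using assms by (rule degenerate_pair_mult_eq)
  have Da2: "(1 + ?b1 * ?b3) * ?a2 = ?b3 * (1 + ?b2 * (1 + b)) + ?b2 * (1 + ?b3 * (1 + ?b1))"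
    using degenerate_pair_mult_eq[OF pair2] by (simp only: \<sigma>_period mult.commute)
  have "(1 + ?b1 * ?b3) * (1 + ?b2 * b) = (1 + ?b1 * ?b3) * (?b2 * a + ?b1 * ?a2)"
    by (simp only: F1)
  also have "\<dots> = ?b2 * ((1 + ?b1 * ?b3) * a) + ?b1 * ((1 + ?b1 * ?b3) * ?a2)"
    by (simp add: algebra_simps)
  finally have "(1 + ?b1 * ?b3) * (1 + ?b2 * b) =
      ?b2 * (?b1 * (1 + b * (1 + ?b2)) + b * (1 + ?b1 * (1 + ?b3))) +
      ?b1 * (?b3 * (1 + ?b2 * (1 + b)) + ?b2 * (1 + ?b3 * (1 + ?b1)))"
    by (simp only: Da0 Da2)
  moreover have "?b1 * ?b2 * (b * ?b2 + ?b1 * ?b3 + b * ?b3) + 1 =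
      (1 + ?b1 * ?b3) * (1 + ?b2 * b) +
      (?b2 * (?b1 * (1 + b * (1 + ?b2)) + b * (1 + ?b1 * (1 + ?b3))) +
       ?b1 * (?b3 * (1 + ?b2 * (1 + b)) + ?b2 * (1 + ?b3 * (1 + ?b1))))"
    by (simp add: algebra_simps add_self add_self_left)
  ultimately have "?b1 * ?b2 * (b * ?b2 + ?b1 * ?b3 + b * ?b3) + 1 = 0"
    by (simp only: add_self)
  thus ?thesis
    by (rule eq_iff_add_eq_0[THEN iffD2])
qed

lemma degenerate_pair_sum_ne_0:
  assumes pair: "degenerate_pair a b" and norm: "b * \<sigma> (\<sigma> b) \<noteq> 1"
  shows "b * \<sigma> (\<sigma> b) + \<sigma> b * \<sigma> (\<sigma> (\<sigma> b)) \<noteq> 0"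
proof
  let ?b1 = "\<sigma> b" and ?b2 = "\<sigma> (\<sigma> b)" and ?b3 = "\<sigma> (\<sigma> (\<sigma> b))"
  assume sum: "b * ?b2 + ?b1 * ?b3 = 0"
  hence "b * ?b2 = ?b1 * ?b3"
    by (rule eq_iff_add_eq_0[THEN iffD2])
  have "(b * ?b2) * (?b1 * ?b3) = ?b1 * ?b2 * (b * ?b3)"
    by (simp only: mult_ac)
  also have "\<dots> = 1"
    using degenerate_pair_norm_identity[OF pair] sum by (simp only: add_0_left)
  finally have "(b * ?b2) * (b * ?b2) = 1 * 1"
    by (simp only: \<open>b * ?b2 = ?b1 * ?b3\<close> mult_1)
  hence "b * ?b2 = 1"
    by (rule square_eq_iff[THEN iffD1])
  with norm show False ..
qed

lemma degenerate_pair_cross_eq: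
  assumes pair: "degenerate_pair a b" and norm: "b * \<sigma> (\<sigma> b) \<noteq> 1"
  shows "\<sigma> b * \<sigma> (\<sigma> b) = \<sigma> (\<sigma> (\<sigma> b)) * b"
proof -
  let ?b1 = "\<sigma> b" and ?b2 = "\<sigma> (\<sigma> b)" and ?b3 = "\<sigma> (\<sigma> (\<sigma> b))"
  let ?P = "b * ?b2 + ?b1 * ?b3"
  have "degenerate_pair (\<sigma> (\<sigma> a)) ?b2"
    using pair by (intro degenerate_pair_\<sigma>)
  from degenerate_pair_norm_identity[OF this]
  have G2: "?b3 * b * (?b2 * b + ?b3 * ?b1 + ?b2 * ?b1) = 1"
    by (simp only: \<sigma>_period)
  have "?P * (?b1 * ?b2 + ?b3 * b) =
      ?b1 * ?b2 * (?P + b * ?b3) + ?b3 * b * (?b2 * b + ?b3 * ?b1 + ?b2 * ?b1)"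
    by (simp add: algebra_simps add_self add_self_left)
  also have "\<dots> = 0"
    using degenerate_pair_norm_identity[OF pair] G2 by (simp only: add_self)
  finally have "?b1 * ?b2 + ?b3 * b = 0"
    using degenerate_pair_sum_ne_0[OF assms] by simp
  thus ?thesis
    by (rule eq_iff_add_eq_0[THEN iffD2])
qed

lemma degenerate_pair_\<sigma>_\<sigma>_right:
  assumes pair: "degenerate_pair a b" and norm: "b * \<sigma> (\<sigma> b) \<noteq> 1"
  shows "\<sigma> (\<sigma> b) = b"
proof -
  let ?b1 = "\<sigma> b" and ?b2 = "\<sigma> (\<sigma> b)" and ?b3 = "\<sigma> (\<sigma> (\<sigma> b))"
  have y1: "?b1 * ?b2 = ?b3 * b"
    using assms by (rule degenerate_pair_cross_eq)
  have "?b1 * ?b3 \<noteq> 1"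
    using norm \<sigma>_eq_1_iff[of "b * ?b2"] by (simp only: \<sigma>_mult simp_thms)
  from degenerate_pair_cross_eq[OF degenerate_pair_\<sigma>[OF pair] this]
  have y0: "?b2 * ?b3 = b * ?b1"
    by (simp only: \<sigma>_period)
  have "?b1 * ?b2 \<noteq> 0"
    using degenerate_pair_norm_identity[OF pair] by auto
  hence nonzero: "b \<noteq> 0" "?b1 \<noteq> 0" "?b2 \<noteq> 0"
    using y1 by auto
  have "(b * ?b2) * (?b3 * ?b3) = (?b3 * b) * (?b2 * ?b3)"
    by (simp only: mult_ac)
  also have "\<dots> = (?b1 * ?b2) * (b * ?b1)"
    by (simp only: y0 y1)
  also have "\<dots> = (b * ?b2) * (?b1 * ?b1)"
    by (simp only: mult_ac)
  finally have "?b3 = ?b1"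
    using nonzero square_eq_iff by simp
  thus ?thesis
    using y0 nonzero by simp
qed

lemma degenerate_pair_\<sigma>_\<sigma>_left:
  assumes pair: "degenerate_pair a b" and norm: "b * \<sigma> (\<sigma> b) \<noteq> 1"
  shows "\<sigma> (\<sigma> a) = a"
proof -
  let ?b1 = "\<sigma> b"
  have b2: "\<sigma> (\<sigma> b) = b"
    using assms by (rule degenerate_pair_\<sigma>_\<sigma>_right)
  have "?b1 * ?b1 \<noteq> 1"
    using norm \<sigma>_eq_1_iff[of "b * b"] by (simp add: b2 \<sigma>_mult)
  hence "1 + ?b1 * ?b1 \<noteq> 0"
    using eq_iff_add_eq_0[of 1 "?b1 * ?b1"] by auto
  moreover have "(1 + ?b1 * ?b1) * \<sigma> (\<sigma> a) = (1 + ?b1 * ?b1) * a"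
    using degenerate_pair_mult_eq[OF degenerate_pair_\<sigma>[OF degenerate_pair_\<sigma>[OF pair]]]
      degenerate_pair_mult_eq[OF pair]
    by (simp only: b2 \<sigma>_period)
  ultimately show ?thesis
    by simp
qed

lemma degenerate_pair_\<sigma>_eq_add_1:
  assumes pair: "degenerate_pair a b" and norm: "b * \<sigma> (\<sigma> b) \<noteq> 1"
  shows "\<sigma> b = b + 1"
proof -
  let ?b1 = "\<sigma> b"
  have b2: "\<sigma> (\<sigma> b) = b" and a2: "\<sigma> (\<sigma> a) = a"
    using assms by (rule degenerate_pair_\<sigma>_\<sigma>_right, rule degenerate_pair_\<sigma>_\<sigma>_left)
  have "b * b \<noteq> 1"
    using norm b2 by simp
  have "a * \<sigma> a = 1 + ?b1 * (1 + ?b1)" "\<sigma> a * a = 1 + b * (1 + b)"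
    using pair degenerate_pair_\<sigma>[OF pair] unfolding degenerate_pair_def
    by (simp_all add: b2 a2 \<sigma>_period)
  hence "(b + ?b1) * (1 + (b + ?b1)) = 0"
    by (simp add: algebra_simps add_self add_self_left)
  moreover have "?b1 \<noteq> b"
  proof
    assume "?b1 = b"
    hence "b * b * (b * b + b * b + b * b) = 1"
      using degenerate_pair_norm_identity[OF pair] by (simp only: b2)
    hence "(b * b) * (b * b) = 1 * 1"
      by (simp only: add_self add_0_left mult_1)
    hence "b * b = 1"
      by (rule square_eq_iff[THEN iffD1])
    with \<open>b * b \<noteq> 1\<close> show False ..
  qed
  hence "b + ?b1 \<noteq> 0"
    using eq_iff_add_eq_0[of b ?b1] by auto
  ultimately have "1 + (b + ?b1) = 0"
    by simp
  hence "?b1 + (b + 1) = 0"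
    by (simp only: ac_simps)
  thus ?thesis
    by (rule eq_iff_add_eq_0[THEN iffD2])
qed

lemma degenerate_pair_power_4:
  assumes pair: "degenerate_pair a b" and norm: "b * \<sigma> (\<sigma> b) \<noteq> 1"
  shows "b ^ 4 = b + 1"
proof -
  have b1: "\<sigma> b = b + 1" and b2: "\<sigma> (\<sigma> b) = b"
    using assms by (rule degenerate_pair_\<sigma>_eq_add_1, rule degenerate_pair_\<sigma>_\<sigma>_right)
  have "b ^ 4 + (b + 1) = \<sigma> b * b * (b * b + \<sigma> b * \<sigma> b + b * \<sigma> b) + 1"
    by (simp add: b1 algebra_simps power4_eq_xxxx add_self add_self_left)
  also have "\<dots> = 0"
    using degenerate_pair_norm_identity[OF pair] by (simp add: b2 two_eq_0)
  finally show ?thesis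
    by (rule eq_iff_add_eq_0[THEN iffD2])
qed

end

locale linearized_system = char2_order4_automorphism +
  fixes A B C D :: 'a
  assumes norm_B_ne_1: "B * \<sigma> (\<sigma> B) \<noteq> 1"
begin

definition \<beta> :: 'a where
  "\<beta> = 1 + B * \<sigma> (\<sigma> B)"

definition solutions :: "('a \<times> 'a) set" where
  "solutions = {(u, v). \<sigma> (\<sigma> v) + A * u + B * v + \<sigma> u = 0 \<and>
                        \<sigma> (\<sigma> v) + \<sigma> (\<sigma> u) + \<sigma> v + C * u + D * v = 0}"

(* Multiplying the second equation by beta * sigma beta and replacing beta v, sigma beta * sigma v
   and beta * sigma^2 v by their values from solution_eliminate_v and its conjugates yields
   c0 u + c1 sigma u + c2 sigma^2 u + c3 sigma^3 u = 0. *)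
definition c0 :: 'a where
  "c0 = \<sigma> \<beta> * A + \<beta> + \<beta> * \<sigma> \<beta> * C + D * \<sigma> \<beta> * \<sigma> (\<sigma> B) * A"

definition c1 :: 'a where
  "c1 = \<sigma> \<beta> + \<beta> * \<sigma> (\<sigma> (\<sigma> B)) * \<sigma> A + D * \<sigma> \<beta> * \<sigma> (\<sigma> B)"

definition c2 :: 'a where
  "c2 = \<sigma> \<beta> * B * \<sigma> (\<sigma> A) + \<beta> * \<sigma> \<beta> + \<beta> * \<sigma> (\<sigma> (\<sigma> B)) + D * \<sigma> \<beta> * \<sigma> (\<sigma> A)"

definition c3 :: 'a where
  "c3 = \<sigma> \<beta> * B + \<beta> * \<sigma> (\<sigma> (\<sigma> A)) + D * \<sigma> \<beta>"

lemma \<beta>_ne_0: "\<beta> \<noteq> 0"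
  using norm_B_ne_1 eq_iff_add_eq_0[of 1 "B * \<sigma> (\<sigma> B)"] by (auto simp: \<beta>_def)

lemma \<sigma>_\<sigma>_\<beta>: "\<sigma> (\<sigma> \<beta>) = \<beta>"
  by (simp add: \<beta>_def \<sigma>_simps mult.commute)

lemma solution_eliminate_v:
  assumes "(u, v) \<in> solutions"
  shows "\<beta> * v = \<sigma> (\<sigma> (\<sigma> u)) + \<sigma> (\<sigma> A) * \<sigma> (\<sigma> u) + \<sigma> (\<sigma> B) * \<sigma> u + \<sigma> (\<sigma> B) * A * u"
proof -
  have e0: "\<sigma> (\<sigma> v) + A * u + B * v + \<sigma> u = 0"
    using assms by (simp add: solutions_def)
  have e2: "v + \<sigma> (\<sigma> A) * \<sigma> (\<sigma> u) + \<sigma> (\<sigma> B) * \<sigma> (\<sigma> v) + \<sigma> (\<sigma> (\<sigma> u)) = 0"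
    using arg_cong[where f = "\<lambda>x. \<sigma> (\<sigma> x)", OF e0] by (simp add: \<sigma>_simps)
  have "\<beta> * v + (\<sigma> (\<sigma> (\<sigma> u)) + \<sigma> (\<sigma> A) * \<sigma> (\<sigma> u) + \<sigma> (\<sigma> B) * \<sigma> u + \<sigma> (\<sigma> B) * A * u) =
      (v + \<sigma> (\<sigma> A) * \<sigma> (\<sigma> u) + \<sigma> (\<sigma> B) * \<sigma> (\<sigma> v) + \<sigma> (\<sigma> (\<sigma> u))) +
      \<sigma> (\<sigma> B) * (\<sigma> (\<sigma> v) + A * u + B * v + \<sigma> u)"
    by (simp add: \<beta>_def algebra_simps add_self add_self_left)
  also have "\<dots> = 0"
    by (simp only: e0 e2 mult_zero_right add_0)
  finally show ?thesis
    by (rule eq_iff_add_eq_0[THEN iffD2])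
qed

lemma solution_reduced_equation:
  assumes "(u, v) \<in> solutions"
  shows "c0 * u + c1 * \<sigma> u + c2 * \<sigma> (\<sigma> u) + c3 * \<sigma> (\<sigma> (\<sigma> u)) = 0"
proof -
  have X: "\<beta> * v = \<sigma> (\<sigma> (\<sigma> u)) + \<sigma> (\<sigma> A) * \<sigma> (\<sigma> u) + \<sigma> (\<sigma> B) * \<sigma> u + \<sigma> (\<sigma> B) * A * u"
    using assms by (rule solution_eliminate_v)
  have e: "\<sigma> (\<sigma> v) + \<sigma> (\<sigma> u) + \<sigma> v + C * u + D * v = 0"
    using assms by (simp add: solutions_def)
  have "c0 * u + c1 * \<sigma> u + c2 * \<sigma> (\<sigma> u) + c3 * \<sigma> (\<sigma> (\<sigma> u)) =
      \<sigma> \<beta> * \<sigma> (\<sigma> (\<beta> * v)) + \<beta> * \<sigma> (\<beta> * v) + D * \<sigma> \<beta> * (\<beta> * v) + \<beta> * \<sigma> \<beta> * (\<sigma> (\<sigma> u) + C * u)"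
    unfolding X by (simp add: c0_def c1_def c2_def c3_def \<sigma>_simps algebra_simps)
  also have "\<dots> = \<beta> * \<sigma> \<beta> * (\<sigma> (\<sigma> v) + \<sigma> (\<sigma> u) + \<sigma> v + C * u + D * v)"
    by (simp add: \<sigma>_mult \<sigma>_\<sigma>_\<beta> algebra_simps)
  also have "\<dots> = 0"
    by (simp only: e mult_zero_right)
  finally show ?thesis .
qed

lemma degenerate_pair_if_coeffs_eq_0:
  assumes "c1 = 0" and "c2 = 0" and "c3 = 0"
  shows "degenerate_pair A B"
proof -
  have "\<beta> * (\<sigma> (\<sigma> A) * \<sigma> (\<sigma> (\<sigma> A)) + (1 + \<sigma> (\<sigma> (\<sigma> B)) * (1 + \<sigma> B))) =
      c2 + \<sigma> (\<sigma> A) * c3"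
    by (simp add: c2_def c3_def \<beta>_def \<sigma>_simps algebra_simps add_self add_self_left)
  hence E: "\<sigma> (\<sigma> A) * \<sigma> (\<sigma> (\<sigma> A)) = 1 + \<sigma> (\<sigma> (\<sigma> B)) * (1 + \<sigma> B)"
    using assms \<beta>_ne_0 eq_iff_add_eq_0[THEN iffD2] by simp
  have "\<beta> * (\<sigma> (\<sigma> (\<sigma> B)) * \<sigma> A + \<sigma> (\<sigma> B) * \<sigma> (\<sigma> (\<sigma> A)) + (1 + \<sigma> (\<sigma> (\<sigma> B)) * \<sigma> B)) =
      c1 + \<sigma> (\<sigma> B) * c3"
    by (simp add: c1_def c3_def \<beta>_def \<sigma>_simps algebra_simps add_self add_self_left)
  hence F: "\<sigma> (\<sigma> (\<sigma> B)) * \<sigma> A + \<sigma> (\<sigma> B) * \<sigma> (\<sigma> (\<sigma> A)) = 1 + \<sigma> (\<sigma> (\<sigma> B)) * \<sigma> B"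
    using assms \<beta>_ne_0 eq_iff_add_eq_0[THEN iffD2] by simp
  have "degenerate_pair (\<sigma> (\<sigma> A)) (\<sigma> (\<sigma> B))"
    unfolding degenerate_pair_def using E F by (simp only: \<sigma>_period)
  hence "degenerate_pair (\<sigma> (\<sigma> (\<sigma> (\<sigma> A)))) (\<sigma> (\<sigma> (\<sigma> (\<sigma> B))))"
    by (rule degenerate_pair_\<sigma>[OF degenerate_pair_\<sigma>])
  thus ?thesis
    by (simp only: \<sigma>_period)
qed

lemma card_solutions_le:
  assumes \<sigma>_power: "\<And>x. \<sigma> x = x ^ q" and "1 < q" and "c1 \<noteq> 0 \<or> c2 \<noteq> 0 \<or> c3 \<noteq> 0"
  shows "card solutions \<le> q ^ 3"
proof -
  define c where "c = (!) [c0, c1, c2, c3]"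
  let ?roots = "{u. (\<Sum>i<4. c i * u ^ q ^ i) = 0}"
  have "c 1 \<noteq> 0 \<or> c 2 \<noteq> 0 \<or> c 3 \<noteq> 0"
    using assms(3) by (simp add: c_def)
  then obtain j where "j < 4" and "c j \<noteq> 0"
    using that[of 1] that[of 2] that[of 3] by auto
  note roots = linearized_poly_roots_bound[of q j 4 c, OF \<open>1 < q\<close> this]
  have roots_eq: "(\<Sum>i<4. c i * u ^ q ^ i) = c0 * u + c1 * \<sigma> u + c2 * \<sigma> (\<sigma> u) + c3 * \<sigma> (\<sigma> (\<sigma> u))"
    for u
    by (simp add: c_def \<sigma>_power eval_nat_numeral power_mult[symmetric] ac_simps)
  define V where "V u = (\<sigma> (\<sigma> (\<sigma> u)) + \<sigma> (\<sigma> A) * \<sigma> (\<sigma> u) + \<sigma> (\<sigma> B) * \<sigma> u + \<sigma> (\<sigma> B) * A * u) / \<beta>"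
    for u
  have "solutions \<subseteq> (\<lambda>u. (u, V u)) ` ?roots"
  proof safe
    fix u v
    assume uv: "(u, v) \<in> solutions"
    have "v = V u"
      using solution_eliminate_v[OF uv] \<beta>_ne_0 by (simp add: V_def eq_divide_eq mult.commute)
    moreover have "u \<in> ?roots"
      using solution_reduced_equation[OF uv] by (simp add: roots_eq)
    ultimately show "(u, v) \<in> (\<lambda>u. (u, V u)) ` ?roots"
      by blast
  qed
  hence "card solutions \<le> card ?roots"
    using roots(1) by (rule surj_card_le[rotated])
  also have "\<dots> \<le> q ^ 3"
    using roots(2) by simp
  finally show ?thesis .
qed

lemma coeffs_not_all_0:
  assumes "\<And>x. \<sigma> x = x ^ 2 ^ h" and "h mod 4 \<noteq> 2"
  shows "c1 \<noteq> 0 \<or> c2 \<noteq> 0 \<or> c3 \<noteq> 0"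
proof (rule ccontr)
  assume "\<not> (c1 \<noteq> 0 \<or> c2 \<noteq> 0 \<or> c3 \<noteq> 0)"
  hence "degenerate_pair A B"
    by (intro degenerate_pair_if_coeffs_eq_0) auto
  hence "\<sigma> B = B + 1" and "B ^ 4 = B + 1"
    using norm_B_ne_1 by (rule degenerate_pair_\<sigma>_eq_add_1, rule degenerate_pair_power_4)
  hence "h mod 4 = 2"
    using CHAR_2 assms(1) by (intro two_power_mod_4_eq_2_if_root_of_x4_x_1[of B]) simp_all
  with assms(2) show False ..
qed

end

lemma linearized_system_frobenius:
  fixes B :: "'a::{finite,field}"
  assumes "q = 2 ^ h" and "card (UNIV :: 'a set) = q ^ 4" and "B ^ (q ^ 2 + 1) \<noteq> 1"
  shows "linearized_system (\<lambda>x. x ^ q) B"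
proof unfold_locales
  show char: "CHAR('a) = 2"
    using assms(1,2) by (intro CHAR_eq_2_if_card_UNIV_eq_power_2[of "h * 4"]) (simp add: power_mult)
  show "(x + y) ^ q = x ^ q + y ^ q" for x y :: 'a
    using assms(1) char by (intro freshmans_dream') simp_all
  show "(((x ^ q) ^ q) ^ q) ^ q = x" for x :: 'a
  proof -
    have "(((x ^ q) ^ q) ^ q) ^ q = x ^ q ^ 4"
      by (simp only: power_mult[symmetric] power4_eq_xxxx)
    thus ?thesis
      using power_card_UNIV_eq_same[of x] assms(2) by simp
  qed
  have "B ^ (q ^ 2 + 1) = B * (B ^ q) ^ q"
    by (simp only: power_add power_one_right power2_eq_square power_mult mult.commute)
  thus "B * (B ^ q) ^ q \<noteq> 1"
    using assms(3) by metis
qed (simp_all add: power_mult_distrib)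

theorem proposition4p2:
  fixes A B C D :: "'a::{finite,field}" and h q :: nat
  assumes "q = 2 ^ h"
    and "card (UNIV :: 'a set) = q ^ 4"
    and "h mod 4 \<noteq> 2"
    and "B ^ (q ^ 2 + 1) \<noteq> 1"
  shows "card {(u :: 'a, v :: 'a).
            v ^ (q ^ 2) + A * u + B * v + u ^ q = 0 \<and>
            v ^ (q ^ 2) + u ^ (q ^ 2) + v ^ q + C * u + D * v = 0} \<le> q ^ 3"
proof -
  have "card {0, 1 :: 'a} \<le> card (UNIV :: 'a set)"
    by (rule card_mono) auto
  hence "q \<noteq> 1"
    using assms(2) by auto
  moreover have "q \<noteq> 0"
    using assms(1) by simp
  ultimately have "1 < q"
    by linarith
  interpret S: linearized_system "\<lambda>x :: 'a. x ^ q" A B C D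
    using assms(1,2,4) by (rule linearized_system_frobenius)
  have "S.c1 \<noteq> 0 \<or> S.c2 \<noteq> 0 \<or> S.c3 \<noteq> 0"
    using assms(1,3) by (intro S.coeffs_not_all_0[of h]) simp_all
  hence "card S.solutions \<le> q ^ 3"
    using \<open>1 < q\<close> by (intro S.card_solutions_le) simp_all
  moreover have "x ^ q ^ 2 = (x ^ q) ^ q" for x :: 'a
    by (simp add: power2_eq_square power_mult)
  ultimately show ?thesis
    by (simp only: S.solutions_def)
qed

end
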